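(* Let $p=3$, $N\ge1$ and $\mathcal{L}=\{0,1,\ldots,3N-3\}$. Then $H^{\mathsf{MD}}_\mathcal{L}\ge0$ and $H^{\mathsf{MD}}_\mathcal{L}\Psi^{\mathsf{MD}}_N=0$. In particular, $\Psi^{\mathsf{MD}}_N$ is an exact zero-energy ground state of $H^{\mathsf{MD}}_\mathcal{L}$.
   Context: Setting. Fermionic creation and annihilation operators $c_k^*,c_k$ are indexed by lattice sites $k\in\mathbb{Z}$ (orbitals), with $\hat n_k=c_k^*c_k$. Let $\gamma>0$. Monomer-dimer Hamiltonian. For $j\in\mathbb{Z}$ let $$B_j=c_{j+2}c_{j+1}+3e^{-2\gamma^2}c_{j+3}c_j .$$ The formal monomer-dimer Hamiltonian is $$H^{\mathsf{MD}}=\sum_j\Bigl(4e^{-3\gamma^2/2}\hat n_j\hat n_{j+2}+B_j^*B_j\Bigr).$$ Equivalently, it is the sum over $k$ of $$\hat n_k\hat n_{k+1}+4e^{-3\gamma^2/2}\hat n_k\hat n_{k+2}+9e^{-4\gamma^2}\hat n_k\hat n_{k+3}+3e^{-2\gamma^2}\bigl(c^*_{k+1}c^*_{k+2}c_{k+3}c_k+c_k^*c_{k+3}^*c_{k+2}c_{k+1}\bigr).$$ $H^{\mathsf{MD}}_\mathcal{L}$ is defined with free boundary conditions, i.e. keeping only terms all of whose site indices lie in $\mathcal{L}$. Monomer-dimer wave function. For $k\in\mathbb{Z}$ let $$A_{\{k\}}=c_{3k}^*,\qquad A_{\{k,k+1\}}=-3e^{-2\gamma^2}c_{3k+1}^*c_{3k+2}^*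 .$$ Then $$\Psi_N^{\mathsf{MD}}=\sum_{(X_1,\ldots,X_D)}A_{X_1}\cdots A_{X_D}|\mathrm{vacuum}\rangle,$$ where the sum runs over all partitions of $\{0,1,\ldots,N-1\}$ into monomers $\{k\}$ and dimers $\{k,k+1\}$, labeled from left to right. *)

theory Defs
  imports Complex_Main "HOL-Library.Complex_Order"
begin

text \<open>A state is a
complex coefficient function on occupation sets (finite sets of sites).
Jordan-Wigner sign convention w.r.t. the natural order of sites.\<close>

type_synonym fock = "nat set \<Rightarrow> complex"

definition jw :: "nat set \<Rightarrow> nat \<Rightarrow> complex" where
  "jw S k = (-1) ^ card {j \<in> S. j < k}"

definition cre :: "nat \<Rightarrow> fock \<Rightarrow> fock" where
  "cre k \<psi> = (\<lambda>S. if k \<in> S then jw S k * \<psi> (S - {k}) else 0)"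

definition ann :: "nat \<Rightarrow> fock \<Rightarrow> fock" where
  "ann k \<psi> = (\<lambda>S. if k \<in> S then 0 else jw S k * \<psi> (insert k S))"

definition num :: "nat \<Rightarrow> fock \<Rightarrow> fock" where
  "num k \<psi> = cre k (ann k \<psi>)"

definition vac :: fock where
  "vac = (\<lambda>S. if S = {} then 1 else 0)"

definition fock_inner :: "nat set \<Rightarrow> fock \<Rightarrow> fock \<Rightarrow> complex" where
  "fock_inner L \<phi> \<psi> = (\<Sum>S\<in>Pow L. cnj (\<phi> S) * \<psi> S)"

definition HMD :: "real \<Rightarrow> nat set \<Rightarrow> fock \<Rightarrow> fock" where
  "HMD \<gamma> L \<psi> = (\<lambda>S. \<Sum>k\<in>L.
      (if k + 1 \<in> L then num k (num (k+1) \<psi>) S else 0)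
    + (if k + 2 \<in> L then complex_of_real (4 * exp (-(3 * \<gamma>^2 / 2))) * num k (num (k+2) \<psi>) S else 0)
    + (if k + 1 \<in> L \<and> k + 2 \<in> L \<and> k + 3 \<in> L then
         complex_of_real (9 * exp (-(4 * \<gamma>^2))) * num k (num (k+3) \<psi>) S
       + complex_of_real (3 * exp (-(2 * \<gamma>^2))) *
           (cre (k+1) (cre (k+2) (ann (k+3) (ann k \<psi>))) S
          + cre k (cre (k+3) (ann (k+2) (ann (k+1) \<psi>))) S)
       else 0))"

text \<open>Monomer-dimer tilings of {0..n-1}, as lists of piece lengths (1 = monomer,
 2 = dimer), left to right.\<close>
definition tilings :: "nat \<Rightarrow> nat list set" where
  "tilings n = {ts. set ts \<subseteq> {1, 2} \<and> sum_list ts = n}"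

text \<open>apply_tiling \<gamma> k ts \<psi> = A_{X_1} ... A_{X_D} \<psi> where the pieces X_i are given by ts,
 starting at position k.\<close>
fun apply_tiling :: "real \<Rightarrow> nat \<Rightarrow> nat list \<Rightarrow> fock \<Rightarrow> fock" where
  "apply_tiling \<gamma> k [] \<psi> = \<psi>"
| "apply_tiling \<gamma> k (t # ts) \<psi> =
     (if t = 1 then cre (3*k) (apply_tiling \<gamma> (k+1) ts \<psi>)
      else (\<lambda>S. complex_of_real (- 3 * exp (-(2 * \<gamma>^2))) *
              cre (3*k+1) (cre (3*k+2) (apply_tiling \<gamma> (k+2) ts \<psi>)) S))"

definition PsiMD :: "real \<Rightarrow> nat \<Rightarrow> fock" where
  "PsiMD \<gamma> N = (\<lambda>S. \<Sum>ts\<in>tilings N. apply_tiling \<gamma> 0 ts vac S)"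

end

theory Submission
  imports Defs
begin

text \<open>
  H_L is a sum of positive terms: B_j^* B_j for each window {j, ..., j+3} \<subseteq> L, the
  next-nearest-neighbour densities n_k n_{k+2}, and n_k n_{k+1} for the few bonds at the ends of L
  that lie in no window. Each term annihilates \<Psi>_N, whose occupation patterns are exactly those
  of monomer-dimer tilings: two occupied orbitals are never at distance 2, adjacent occupied
  orbitals 3k+1, 3k+2 always form a dimer (which lies inside a window), and B_j \<Psi>_N = 0 because
  splitting a dimer into two monomers multiplies the amplitude by -3 e^{-2\<gamma>^2}, which cancels
  the two terms of B_j.
\<close>


section \<open>Pointwise action of the operators\<close>

lemma jw_cong: "{j \<in> X. j < m} = {j \<in> S. j < k} \<Longrightarrow> jw X m = jw S k"
  unfolding jw_def by simp

lemma jw_mult_self: "jw S k * jw S k = 1"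
  unfolding jw_def by (simp flip: power_add)

lemma num_apply: "num k \<psi> S = (if k \<in> S then \<psi> S else 0)"
proof -
  have "jw (S - {k}) k = jw S k" by (rule jw_cong) auto
  then show ?thesis
    unfolding num_def cre_def ann_def by (auto simp: insert_absorb jw_mult_self)
qed

definition hop_out :: "nat \<Rightarrow> nat set \<Rightarrow> nat set" where
  "hop_out j S = insert j (insert (j+3) (S - {j+1, j+2}))"

definition hop_in :: "nat \<Rightarrow> nat set \<Rightarrow> nat set" where
  "hop_in j S = insert (j+1) (insert (j+2) (S - {j, j+3}))"

lemma hop_in_hop_out:
  "j \<notin> S \<Longrightarrow> j+3 \<notin> S \<Longrightarrow> j+1 \<in> S \<Longrightarrow> j+2 \<in> S \<Longrightarrow> hop_in j (hop_out j S) = S"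
  unfolding hop_in_def hop_out_def by auto

lemma hop_out_hop_in:
  "j+1 \<notin> S \<Longrightarrow> j+2 \<notin> S \<Longrightarrow> j \<in> S \<Longrightarrow> j+3 \<in> S \<Longrightarrow> hop_out j (hop_in j S) = S"
  unfolding hop_in_def hop_out_def by auto

text \<open>Each Jordan-Wigner sign of a hop inside the window j, ..., j+3 equals jw S j: the only
  sites between j and the acting site lie in the window, and their occupation is fixed by the case.
  Hence the four signs cancel.\<close>

lemma inward_hop_apply:
  "cre (j+1) (cre (j+2) (ann (j+3) (ann j \<psi>))) S =
     (if j \<notin> S \<and> j+3 \<notin> S \<and> j+1 \<in> S \<and> j+2 \<in> S then \<psi> (hop_out j S) else 0)"
proof (cases "j \<notin> S \<and> j+3 \<notin> S \<and> j+1 \<in> S \<and> j+2 \<in> S")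
  case True
  have signs: "jw S (j+1) = jw S j" "jw (S - {j+1}) (j+2) = jw S j"
    "jw (S - {j+1} - {j+2}) (j+3) = jw S j" "jw (insert (j+3) (S - {j+1} - {j+2})) j = jw S j"
    by (rule jw_cong; use True in \<open>auto simp: less_Suc_eq numeral_3_eq_3\<close>)+
  have "insert j (insert (j+3) (S - {j+1} - {j+2})) = hop_out j S"
    unfolding hop_out_def by auto
  with True signs show ?thesis
    unfolding cre_def ann_def by (simp add: mult.assoc jw_mult_self flip: mult.assoc)
qed (auto simp: cre_def ann_def)

lemma outward_hop_apply:
  "cre j (cre (j+3) (ann (j+2) (ann (j+1) \<psi>))) S =
     (if j+1 \<notin> S \<and> j+2 \<notin> S \<and> j \<in> S \<and> j+3 \<in> S then \<psi> (hop_in j S) else 0)"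
proof (cases "j+1 \<notin> S \<and> j+2 \<notin> S \<and> j \<in> S \<and> j+3 \<in> S")
  case True
  have signs: "jw (S - {j}) (j+3) = jw S j" "jw (S - {j} - {j+3}) (j+2) = jw S j"
    "jw (insert (j+2) (S - {j} - {j+3})) (j+1) = jw S j"
    by (rule jw_cong; use True in \<open>auto simp: less_Suc_eq numeral_3_eq_3\<close>)+
  have "insert (j+1) (insert (j+2) (S - {j} - {j+3})) = hop_in j S"
    unfolding hop_in_def by auto
  with True signs show ?thesis
    unfolding cre_def ann_def by (simp add: mult.assoc jw_mult_self flip: mult.assoc)
qed (auto simp: cre_def ann_def)


section \<open>Splitting the Hamiltonian into positive terms\<close>

definition hop_amp :: "real \<Rightarrow> real" where
  "hop_amp \<gamma> = 3 * exp (-(2 * \<gamma>^2))"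

text \<open>B_j^* B_j with B_j = c_{j+2} c_{j+1} + a c_{j+3} c_j and a = hop_amp \<gamma>, multiplied out.\<close>

definition BstarB :: "real \<Rightarrow> nat \<Rightarrow> fock \<Rightarrow> fock" where
  "BstarB \<gamma> j \<psi> = (\<lambda>S. num (j+1) (num (j+2) \<psi>) S
     + complex_of_real (hop_amp \<gamma> ^ 2) * num j (num (j+3) \<psi>) S
     + complex_of_real (hop_amp \<gamma>) * (cre (j+1) (cre (j+2) (ann (j+3) (ann j \<psi>))) S
                                     + cre j (cre (j+3) (ann (j+2) (ann (j+1) \<psi>))) S))"

definition windows :: "nat set \<Rightarrow> nat set" where
  "windows L = {k \<in> L. k+1 \<in> L \<and> k+2 \<in> L \<and> k+3 \<in> L}"

text \<open>Bonds (k, k+1) whose n_k n_{k+1} is not absorbed into B_{k-1}^* B_{k-1}; for an interval L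
  these are just the two end bonds.\<close>

definition boundary_bonds :: "nat set \<Rightarrow> nat set" where
  "boundary_bonds L = {k \<in> L. k+1 \<in> L} - Suc ` windows L"

lemma HMD_decompose:
  assumes "finite L"
  shows "HMD \<gamma> L \<psi> S =
      (\<Sum>k\<in>boundary_bonds L. num k (num (k+1) \<psi>) S)
    + (\<Sum>k\<in>{k \<in> L. k+2 \<in> L}. complex_of_real (4 * exp (-(3 * \<gamma>^2 / 2))) * num k (num (k+2) \<psi>) S)
    + (\<Sum>k\<in>windows L. BstarB \<gamma> k \<psi> S)"
proof -
  let ?nn = "\<lambda>k. num k (num (k+1) \<psi>) S"
  let ?nnn = "\<lambda>k. complex_of_real (4 * exp (-(3 * \<gamma>^2 / 2))) * num k (num (k+2) \<psi>) S"
  let ?rest = "\<lambda>k. complex_of_real (9 * exp (-(4 * \<gamma>^2))) * num k (num (k+3) \<psi>) S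
     + complex_of_real (3 * exp (-(2 * \<gamma>^2))) * (cre (k+1) (cre (k+2) (ann (k+3) (ann k \<psi>))) S
                                     + cre k (cre (k+3) (ann (k+2) (ann (k+1) \<psi>))) S)"
  have sums: "HMD \<gamma> L \<psi> S = (\<Sum>k\<in>L. if k+1 \<in> L then ?nn k else 0)
     + (\<Sum>k\<in>L. if k+2 \<in> L then ?nnn k else 0)
     + (\<Sum>k\<in>L. if k+1 \<in> L \<and> k+2 \<in> L \<and> k+3 \<in> L then ?rest k else 0)"
    unfolding HMD_def sum.distrib ..
  have fin: "finite {k \<in> L. k+1 \<in> L}" using assms by simp
  have sub: "Suc ` windows L \<subseteq> {k \<in> L. k+1 \<in> L}" unfolding windows_def by auto
  have "(\<Sum>k\<in>L. if k+1 \<in> L then ?nn k else 0) = (\<Sum>k\<in>{k \<in> L. k+1 \<in> L}. ?nn k)"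
    using assms by (rule sum.inter_filter[symmetric])
  also have "\<dots> = (\<Sum>k\<in>boundary_bonds L. ?nn k) + (\<Sum>k\<in>Suc ` windows L. ?nn k)"
    unfolding boundary_bonds_def using sum.subset_diff[OF sub fin] .
  also have "(\<Sum>k\<in>Suc ` windows L. ?nn k) = (\<Sum>k\<in>windows L. num (k+1) (num (k+2) \<psi>) S)"
    by (simp add: sum.reindex)
  finally have bonds: "(\<Sum>k\<in>L. if k+1 \<in> L then ?nn k else 0) =
      (\<Sum>k\<in>boundary_bonds L. ?nn k) + (\<Sum>k\<in>windows L. num (k+1) (num (k+2) \<psi>) S)" .
  have next_nearest: "(\<Sum>k\<in>L. if k+2 \<in> L then ?nnn k else 0) = (\<Sum>k\<in>{k \<in> L. k+2 \<in> L}. ?nnn k)"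
    using assms by (rule sum.inter_filter[symmetric])
  have "(\<Sum>k\<in>L. if k+1 \<in> L \<and> k+2 \<in> L \<and> k+3 \<in> L then ?rest k else 0) = (\<Sum>k\<in>windows L. ?rest k)"
    unfolding windows_def using assms by (rule sum.inter_filter[symmetric])
  moreover have "?rest k = BstarB \<gamma> k \<psi> S - num (k+1) (num (k+2) \<psi>) S" for k
  proof -
    have "9 * exp (-(4 * \<gamma>^2)) = hop_amp \<gamma> ^ 2"
      unfolding hop_amp_def by (simp add: power_mult_distrib flip: exp_of_nat_mult)
    then show ?thesis unfolding BstarB_def hop_amp_def by simp
  qed
  ultimately have "(\<Sum>k\<in>L. if k+1 \<in> L \<and> k+2 \<in> L \<and> k+3 \<in> L then ?rest k else 0)
      = (\<Sum>k\<in>windows L. BstarB \<gamma> k \<psi> S) - (\<Sum>k\<in>windows L. num (k+1) (num (k+2) \<psi>) S)"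
    by (simp add: sum_subtractf)
  then show ?thesis unfolding sums bonds next_nearest by simp
qed


section \<open>Positivity\<close>

lemma cnj_mult_self_nonneg: "0 \<le> cnj z * z"
  by (simp add: less_eq_complex_def)

lemma fock_inner_add: "fock_inner L \<phi> (\<lambda>S. \<psi> S + \<chi> S) = fock_inner L \<phi> \<psi> + fock_inner L \<phi> \<chi>"
  unfolding fock_inner_def by (simp add: distrib_left sum.distrib)

lemma fock_inner_scale: "fock_inner L \<phi> (\<lambda>S. c * \<psi> S) = c * fock_inner L \<phi> \<psi>"
  unfolding fock_inner_def by (simp add: sum_distrib_left mult.left_commute)

lemma fock_inner_sum: "fock_inner L \<phi> (\<lambda>S. \<Sum>k\<in>K. \<psi> k S) = (\<Sum>k\<in>K. fock_inner L \<phi> (\<psi> k))"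
  unfolding fock_inner_def by (simp add: sum_distrib_left) (rule sum.swap)

lemma fock_inner_num_num_nonneg: "0 \<le> fock_inner L \<psi> (num x (num y \<psi>))"
  unfolding fock_inner_def by (auto intro!: sum_nonneg simp: num_apply cnj_mult_self_nonneg)

text \<open>The form is \<Sum>S\<in>P. |\<psi> S + a \<psi> (f S)|^2 plus the diagonal terms on A - P and B - f ` P.\<close>

lemma sum_hop_form_nonneg:
  fixes \<psi> :: "'a \<Rightarrow> complex" and a :: real
  assumes "finite U" "P \<subseteq> A" "A \<subseteq> U" "f ` P \<subseteq> B" "B \<subseteq> U" "inj_on f P"
    and g_f: "\<And>S. S \<in> P \<Longrightarrow> g (f S) = S"
  shows "0 \<le> (\<Sum>S\<in>U. cnj (\<psi> S) * ((if S \<in> A then \<psi> S else 0)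
                + of_real (a^2) * (if S \<in> B then \<psi> S else 0)
                + of_real a * ((if S \<in> P then \<psi> (f S) else 0) + (if S \<in> f ` P then \<psi> (g S) else 0))))"
    (is "0 \<le> ?form")
proof -
  let ?q = "\<lambda>S. cnj (\<psi> S) * \<psi> S"
  have fin: "finite A" "finite B" "finite P"
    using assms(1-3,5) by (auto intro: finite_subset)
  have restrict: "(\<Sum>S\<in>U. cnj (\<psi> S) * (if S \<in> X then h S else 0)) = (\<Sum>S\<in>X. cnj (\<psi> S) * h S)"
    if "X \<subseteq> U" for X h
    using \<open>finite U\<close> that by (intro sum.mono_neutral_cong_right) auto
  have form: "?form = sum ?q A + of_real (a^2) * sum ?q B
      + of_real a * ((\<Sum>S\<in>P. cnj (\<psi> S) * \<psi> (f S)) + (\<Sum>S\<in>P. cnj (\<psi> (f S)) * \<psi> S))"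
  proof -
    have "?form = (\<Sum>S\<in>U. cnj (\<psi> S) * (if S \<in> A then \<psi> S else 0))
        + of_real (a^2) * (\<Sum>S\<in>U. cnj (\<psi> S) * (if S \<in> B then \<psi> S else 0))
        + of_real a * ((\<Sum>S\<in>U. cnj (\<psi> S) * (if S \<in> P then \<psi> (f S) else 0))
                       + (\<Sum>S\<in>U. cnj (\<psi> S) * (if S \<in> f ` P then \<psi> (g S) else 0)))"
      by (simp add: sum.distrib sum_distrib_left distrib_left mult.left_commute)
    moreover have "(\<Sum>S\<in>f ` P. cnj (\<psi> S) * \<psi> (g S)) = (\<Sum>S\<in>P. cnj (\<psi> (f S)) * \<psi> S)"
      using \<open>inj_on f P\<close> g_f by (simp add: sum.reindex)
    ultimately show ?thesis
      using assms(2-5) by (simp add: restrict)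
  qed
  have square: "(\<Sum>S\<in>P. cnj (\<psi> S + of_real a * \<psi> (f S)) * (\<psi> S + of_real a * \<psi> (f S)))
      = sum ?q P + of_real (a^2) * (\<Sum>S\<in>P. ?q (f S))
        + of_real a * ((\<Sum>S\<in>P. cnj (\<psi> S) * \<psi> (f S)) + (\<Sum>S\<in>P. cnj (\<psi> (f S)) * \<psi> S))"
  proof -
    have "cnj (x + of_real a * y) * (x + of_real a * y)
        = cnj x * x + of_real (a^2) * (cnj y * y) + of_real a * (cnj x * y + cnj y * x)" for x y
      by (simp add: algebra_simps power2_eq_square)
    then show ?thesis by (simp add: sum.distrib flip: sum_distrib_left)
  qed
  have "sum ?q P \<le> sum ?q A"
    using fin assms(2) by (intro sum_mono2) (auto simp: cnj_mult_self_nonneg)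
  moreover have "(\<Sum>S\<in>P. ?q (f S)) \<le> sum ?q B"
  proof -
    have "(\<Sum>S\<in>P. ?q (f S)) = sum ?q (f ` P)" using \<open>inj_on f P\<close> by (simp add: sum.reindex)
    also have "\<dots> \<le> sum ?q B" using fin assms(4) by (intro sum_mono2) (auto simp: cnj_mult_self_nonneg)
    finally show ?thesis .
  qed
  then have "of_real (a^2) * (\<Sum>S\<in>P. ?q (f S)) \<le> of_real (a^2) * sum ?q B"
    by (rule mult_left_mono) (simp add: less_eq_complex_def)
  ultimately have "(\<Sum>S\<in>P. cnj (\<psi> S + of_real a * \<psi> (f S)) * (\<psi> S + of_real a * \<psi> (f S))) \<le> ?form"
    unfolding form square by (intro add_mono add_right_mono) auto
  moreover have "0 \<le> (\<Sum>S\<in>P. cnj (\<psi> S + of_real a * \<psi> (f S)) * (\<psi> S + of_real a * \<psi> (f S)))"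
    by (intro sum_nonneg) (rule cnj_mult_self_nonneg)
  ultimately show ?thesis by (rule order_trans[rotated])
qed

lemma BstarB_apply:
  "BstarB \<gamma> j \<psi> S = (if j+1 \<in> S \<and> j+2 \<in> S then \<psi> S else 0)
     + complex_of_real (hop_amp \<gamma> ^ 2) * (if j \<in> S \<and> j+3 \<in> S then \<psi> S else 0)
     + complex_of_real (hop_amp \<gamma>) *
         ((if j \<notin> S \<and> j+3 \<notin> S \<and> j+1 \<in> S \<and> j+2 \<in> S then \<psi> (hop_out j S) else 0)
        + (if j+1 \<notin> S \<and> j+2 \<notin> S \<and> j \<in> S \<and> j+3 \<in> S then \<psi> (hop_in j S) else 0))"
  unfolding BstarB_def num_apply inward_hop_apply outward_hop_apply by simp

lemma hop_out_image:
  assumes "{j, j+1, j+2, j+3} \<subseteq> L"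
  shows "hop_out j ` {S \<in> Pow L. j \<notin> S \<and> j+3 \<notin> S \<and> j+1 \<in> S \<and> j+2 \<in> S}
       = {S \<in> Pow L. j+1 \<notin> S \<and> j+2 \<notin> S \<and> j \<in> S \<and> j+3 \<in> S}"
proof
  show "hop_out j ` {S \<in> Pow L. j \<notin> S \<and> j+3 \<notin> S \<and> j+1 \<in> S \<and> j+2 \<in> S}
      \<subseteq> {S \<in> Pow L. j+1 \<notin> S \<and> j+2 \<notin> S \<and> j \<in> S \<and> j+3 \<in> S}"
    using assms unfolding hop_out_def by auto
  show "{S \<in> Pow L. j+1 \<notin> S \<and> j+2 \<notin> S \<and> j \<in> S \<and> j+3 \<in> S}
      \<subseteq> hop_out j ` {S \<in> Pow L. j \<notin> S \<and> j+3 \<notin> S \<and> j+1 \<in> S \<and> j+2 \<in> S}"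
  proof
    fix T assume T: "T \<in> {S \<in> Pow L. j+1 \<notin> S \<and> j+2 \<notin> S \<and> j \<in> S \<and> j+3 \<in> S}"
    then have "hop_in j T \<in> {S \<in> Pow L. j \<notin> S \<and> j+3 \<notin> S \<and> j+1 \<in> S \<and> j+2 \<in> S}"
      using assms unfolding hop_in_def by auto
    moreover have "T = hop_out j (hop_in j T)" using T hop_out_hop_in by auto
    ultimately show "T \<in> hop_out j ` {S \<in> Pow L. j \<notin> S \<and> j+3 \<notin> S \<and> j+1 \<in> S \<and> j+2 \<in> S}"
      by blast
  qed
qed

lemma fock_inner_BstarB_nonneg:
  assumes "finite L" "j \<in> windows L"
  shows "0 \<le> fock_inner L \<psi> (BstarB \<gamma> j \<psi>)"
proof -
  define P where "P = {S \<in> Pow L. j \<notin> S \<and> j+3 \<notin> S \<and> j+1 \<in> S \<and> j+2 \<in> S}"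
  have window: "{j, j+1, j+2, j+3} \<subseteq> L" using assms(2) unfolding windows_def by auto
  have image: "hop_out j ` P = {S \<in> Pow L. j+1 \<notin> S \<and> j+2 \<notin> S \<and> j \<in> S \<and> j+3 \<in> S}"
    unfolding P_def using hop_out_image[OF window] .
  have "0 \<le> (\<Sum>S\<in>Pow L. cnj (\<psi> S) * ((if S \<in> {S \<in> Pow L. j+1 \<in> S \<and> j+2 \<in> S} then \<psi> S else 0)
         + of_real (hop_amp \<gamma> ^ 2) * (if S \<in> {S \<in> Pow L. j \<in> S \<and> j+3 \<in> S} then \<psi> S else 0)
         + of_real (hop_amp \<gamma>) * ((if S \<in> P then \<psi> (hop_out j S) else 0)
                                  + (if S \<in> hop_out j ` P then \<psi> (hop_in j S) else 0))))"
  proof (rule sum_hop_form_nonneg)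
    show "\<And>S. S \<in> P \<Longrightarrow> hop_in j (hop_out j S) = S"
      unfolding P_def by (auto simp: hop_in_hop_out)
    then show "inj_on (hop_out j) P" by (rule inj_on_inverseI)
    show "hop_out j ` P \<subseteq> {S \<in> Pow L. j \<in> S \<and> j+3 \<in> S}"
      unfolding image by blast
  qed (use assms(1) in \<open>auto simp: P_def\<close>)
  also have "\<dots> = fock_inner L \<psi> (BstarB \<gamma> j \<psi>)"
    unfolding fock_inner_def BstarB_apply image by (intro sum.cong) (auto simp: P_def)
  finally show ?thesis .
qed

lemma HMD_nonneg:
  assumes "finite L"
  shows "0 \<le> fock_inner L \<psi> (HMD \<gamma> L \<psi>)"
proof -
  let ?c = "complex_of_real (4 * exp (-(3 * \<gamma>^2 / 2)))"
  have "HMD \<gamma> L \<psi> = (\<lambda>S. (\<Sum>k\<in>boundary_bonds L. num k (num (k+1) \<psi>) S)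
      + (\<Sum>k\<in>{k \<in> L. k+2 \<in> L}. ?c * num k (num (k+2) \<psi>) S)
      + (\<Sum>k\<in>windows L. BstarB \<gamma> k \<psi> S))"
    by (rule ext) (rule HMD_decompose[OF assms])
  then have "fock_inner L \<psi> (HMD \<gamma> L \<psi>) =
      (\<Sum>k\<in>boundary_bonds L. fock_inner L \<psi> (num k (num (k+1) \<psi>)))
      + (\<Sum>k\<in>{k \<in> L. k+2 \<in> L}. ?c * fock_inner L \<psi> (num k (num (k+2) \<psi>)))
      + (\<Sum>k\<in>windows L. fock_inner L \<psi> (BstarB \<gamma> k \<psi>))"
    by (simp add: fock_inner_add fock_inner_sum fock_inner_scale)
  moreover have "0 \<le> ?c" by (simp add: less_eq_complex_def)
  ultimately show ?thesis
    using assms by (simp add: add_nonneg_nonneg sum_nonneg mult_nonneg_nonneg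
        fock_inner_num_num_nonneg fock_inner_BstarB_nonneg)
qed


section \<open>The monomer-dimer state\<close>

fun tiling_sites :: "nat \<Rightarrow> nat list \<Rightarrow> nat set" where
  "tiling_sites k [] = {}"
| "tiling_sites k (t # ts) =
     (if t = 1 then insert (3*k) (tiling_sites (k+1) ts)
      else insert (3*k+1) (insert (3*k+2) (tiling_sites (k+2) ts)))"

fun tiling_weight :: "complex \<Rightarrow> nat list \<Rightarrow> complex" where
  "tiling_weight c [] = 1"
| "tiling_weight c (t # ts) = (if t = 1 then 1 else c) * tiling_weight c ts"

lemma tiling_sites_ge: "x \<in> tiling_sites k ts \<Longrightarrow> 3*k \<le> x"
  by (induction ts arbitrary: k) (auto split: if_splits, fastforce+)

lemma tiling_sites_less: "set ts \<subseteq> {1,2} \<Longrightarrow> x \<in> tiling_sites k ts \<Longrightarrow> x < 3*(k + sum_list ts)"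
  by (induction ts arbitrary: k) (auto, fastforce+)

lemma tiling_sites_append:
  "set xs \<subseteq> {1,2} \<Longrightarrow>
     tiling_sites k (xs @ ys) = tiling_sites k xs \<union> tiling_sites (k + sum_list xs) ys"
  by (induction xs arbitrary: k) (auto simp: add.assoc)

lemma tiling_weight_append: "tiling_weight c (xs @ ys) = tiling_weight c xs * tiling_weight c ys"
  by (induction xs) auto

lemma tiling_sites_add2_notin: "x \<in> tiling_sites k ts \<Longrightarrow> x + 2 \<notin> tiling_sites k ts"
  by (induction ts arbitrary: k) (auto dest: tiling_sites_ge split: if_splits)

lemma tiling_sites_head: "set (t # ts) \<subseteq> {1,2} \<Longrightarrow> 3*k \<in> tiling_sites k (t # ts) \<longleftrightarrow> t = 1"
  by (auto dest: tiling_sites_ge)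

lemma tiling_sites_tail:
  "set (t # ts) \<subseteq> {1,2} \<Longrightarrow> tiling_sites (k + t) ts = tiling_sites k (t # ts) - {..<3*(k+t)}"
  by (auto dest: tiling_sites_ge)

lemma tiling_sites_inj:
  "set ts \<subseteq> {1,2} \<Longrightarrow> set ts' \<subseteq> {1,2} \<Longrightarrow> tiling_sites k ts = tiling_sites k ts'
    \<Longrightarrow> ts = ts'"
proof (induction ts arbitrary: k ts')
  case Nil
  then show ?case by (cases ts') auto
next
  case (Cons t ts)
  then obtain t' ts'' where ts': "ts' = t' # ts''" by (cases ts') auto
  have "t = 1 \<longleftrightarrow> t' = 1"
    using tiling_sites_head[of t ts k] tiling_sites_head[of t' ts'' k] Cons.prems ts' by metis
  moreover have "t \<in> {1,2}" "t' \<in> {1,2}" using Cons.prems ts' by auto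
  ultimately have "t = t'" by auto
  then have "tiling_sites (k + t) ts = tiling_sites (k + t) ts''"
    using tiling_sites_tail[of t ts k] tiling_sites_tail[of t' ts'' k] Cons.prems ts' by simp
  with Cons ts' \<open>t = t'\<close> show ?case by simp
qed

lemma tiling_sites_bond:
  assumes "set ts \<subseteq> {1,2}" "x \<in> tiling_sites k ts" "x + 1 \<in> tiling_sites k ts"
  shows "\<exists>xs ys. ts = xs @ 2 # ys \<and> x = 3*(k + sum_list xs) + 1"
  using assms
proof (induction ts arbitrary: k)
  case (Cons t ts)
  show ?case
  proof (cases "x \<in> tiling_sites (k+t) ts")
    case True
    with Cons.prems have "x + 1 \<in> tiling_sites (k+t) ts" by (auto dest: tiling_sites_ge)
    with Cons.IH[of "k+t"] Cons.prems(1) True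
    obtain xs ys where "ts = xs @ 2 # ys" "x = 3*(k + t + sum_list xs) + 1"
      by auto
    then have "t # ts = (t # xs) @ 2 # ys \<and> x = 3*(k + sum_list (t # xs)) + 1" by simp
    then show ?thesis by blast
  next
    case False
    with Cons.prems have "t = 2 \<and> x = 3*k + 1" by (auto split: if_splits dest!: tiling_sites_ge)
    then have "t # ts = [] @ 2 # ts \<and> x = 3*(k + sum_list []) + 1" by simp
    then show ?thesis by blast
  qed
qed simp

lemma tiling_sites_monomer_pair:
  assumes "set ts \<subseteq> {1,2}" "j \<in> tiling_sites k ts" "j + 3 \<in> tiling_sites k ts"
    and "j + 1 \<notin> tiling_sites k ts"
  shows "\<exists>xs ys. ts = xs @ 1 # 1 # ys \<and> j = 3*(k + sum_list xs)"
  using assms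
proof (induction ts arbitrary: k)
  case (Cons t ts)
  show ?case
  proof (cases "j \<in> tiling_sites (k+t) ts")
    case True
    with Cons.prems have "j + 3 \<in> tiling_sites (k+t) ts" "j + 1 \<notin> tiling_sites (k+t) ts"
      by (auto split: if_splits dest!: tiling_sites_ge)
    with Cons.IH[of "k+t"] Cons.prems(1) True
    obtain xs ys where "ts = xs @ 1 # 1 # ys" "j = 3*(k + t + sum_list xs)"
      by auto
    then have "t # ts = (t # xs) @ 1 # 1 # ys \<and> j = 3*(k + sum_list (t # xs))" by simp
    then show ?thesis by blast
  next
    case False
    with Cons.prems have "t = 1" "j = 3*k"
      by (auto split: if_splits dest!: tiling_sites_ge)
    moreover from this Cons.prems(3) have "3*(k+1) \<in> tiling_sites (k+1) ts"
      by (simp add: add.commute)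
    moreover from this obtain t' ts' where "ts = t' # ts'"
      by (cases ts) auto
    ultimately have "t # ts = [] @ 1 # 1 # ts' \<and> j = 3*(k + sum_list [])"
      using tiling_sites_head[of t' ts' "k+1"] Cons.prems(1) by auto
    then show ?thesis by blast
  qed
qed simp

lemma tiling_sites_dimer_hop:
  assumes "set xs \<subseteq> {1,2}"
  shows "tiling_sites k (xs @ 1 # 1 # ys) = hop_out (3*(k + sum_list xs)) (tiling_sites k (xs @ 2 # ys))"
    and "tiling_sites k (xs @ 2 # ys) = hop_in (3*(k + sum_list xs)) (tiling_sites k (xs @ 1 # 1 # ys))"
proof -
  have below: "x < 3*(k + sum_list xs)" if "x \<in> tiling_sites k xs" for x
    using tiling_sites_less[OF assms that] .
  show "tiling_sites k (xs @ 1 # 1 # ys) = hop_out (3*(k + sum_list xs)) (tiling_sites k (xs @ 2 # ys))"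
    unfolding hop_out_def tiling_sites_append[OF assms]
    by (auto simp: algebra_simps dest: tiling_sites_ge below)
  show "tiling_sites k (xs @ 2 # ys) = hop_in (3*(k + sum_list xs)) (tiling_sites k (xs @ 1 # 1 # ys))"
    unfolding hop_in_def tiling_sites_append[OF assms]
    by (auto simp: algebra_simps dest: tiling_sites_ge below)
qed

lemma cre_single:
  assumes "\<forall>x\<in>R. k < x"
  shows "cre k (\<lambda>S. if S = R then w else 0) = (\<lambda>S. if S = insert k R then w else 0)"
proof -
  have "{j \<in> insert k R. j < k} = {}" using assms by auto
  then have "jw (insert k R) k = 1" unfolding jw_def by (simp only: card.empty power_0)
  moreover have "k \<in> S \<Longrightarrow> S - {k} = R \<longleftrightarrow> S = insert k R" for S
    using assms by auto
  ultimately show ?thesis unfolding cre_def fun_eq_iff by auto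
qed

lemma apply_tiling_vac:
  "apply_tiling \<gamma> k ts vac =
     (\<lambda>S. if S = tiling_sites k ts then tiling_weight (- of_real (hop_amp \<gamma>)) ts else 0)"
proof (induction ts arbitrary: k)
  case Nil
  show ?case by (simp add: vac_def fun_eq_iff)
next
  case (Cons t ts)
  have "\<forall>x\<in>tiling_sites (k+1) ts. 3*k < x" "\<forall>x\<in>tiling_sites (k+2) ts. 3*k+2 < x"
    "\<forall>x\<in>insert (3*k+2) (tiling_sites (k+2) ts). 3*k+1 < x"
    by (auto dest: tiling_sites_ge)
  then show ?case
    by (simp add: Cons.IH cre_single hop_amp_def fun_eq_iff)
qed

lemma finite_tilings: "finite (tilings n)"
proof -
  have "length ts \<le> sum_list ts" if "set ts \<subseteq> {1,2}" for ts :: "nat list"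
    using that by (induction ts) auto
  then have "tilings n \<subseteq> {ts. set ts \<subseteq> {1,2} \<and> length ts \<le> n}"
    unfolding tilings_def by fastforce
  moreover have "finite {ts. set ts \<subseteq> {1::nat,2} \<and> length ts \<le> n}"
    by (rule finite_lists_length_le) simp
  ultimately show ?thesis by (rule finite_subset)
qed

lemma PsiMD_apply:
  "PsiMD \<gamma> N S = (\<Sum>ts\<in>tilings N.
     if S = tiling_sites 0 ts then tiling_weight (- of_real (hop_amp \<gamma>)) ts else 0)"
  unfolding PsiMD_def apply_tiling_vac ..

lemma PsiMD_tiling_sites:
  assumes "ts \<in> tilings N"
  shows "PsiMD \<gamma> N (tiling_sites 0 ts) = tiling_weight (- of_real (hop_amp \<gamma>)) ts"
proof -
  have "tiling_sites 0 ts = tiling_sites 0 ts' \<longleftrightarrow> ts' = ts" if "ts' \<in> tilings N" for ts'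
    using assms that tiling_sites_inj unfolding tilings_def by blast
  then show ?thesis
    unfolding PsiMD_apply using assms finite_tilings by (simp add: sum.delta' cong: if_cong)
qed

lemma PsiMD_eq_0: "(\<And>ts. ts \<in> tilings N \<Longrightarrow> S \<noteq> tiling_sites 0 ts) \<Longrightarrow> PsiMD \<gamma> N S = 0"
  unfolding PsiMD_apply by (simp add: sum.neutral)

lemma PsiMD_nonzero: "PsiMD \<gamma> N \<noteq> (\<lambda>S. 0)"
proof -
  have "replicate N 1 \<in> tilings N" unfolding tilings_def by (auto simp: sum_list_replicate)
  moreover have "tiling_weight c (replicate n 1) = 1" for c n by (induction n) auto
  ultimately have "PsiMD \<gamma> N (tiling_sites 0 (replicate N 1)) = 1" by (simp add: PsiMD_tiling_sites)
  then show ?thesis by (metis one_neq_zero)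
qed

lemma PsiMD_add2_eq_0: "x \<in> S \<Longrightarrow> x + 2 \<in> S \<Longrightarrow> PsiMD \<gamma> N S = 0"
  by (rule PsiMD_eq_0) (use tiling_sites_add2_notin in blast)

lemma PsiMD_bond:
  assumes "PsiMD \<gamma> N S \<noteq> 0" "x \<in> S" "x + 1 \<in> S"
  shows "\<exists>m. x = 3*m + 1 \<and> m + 2 \<le> N"
proof -
  obtain ts where ts: "ts \<in> tilings N" "S = tiling_sites 0 ts"
    using assms(1) PsiMD_eq_0 by blast
  then obtain xs ys where "ts = xs @ 2 # ys" "x = 3*(sum_list xs) + 1"
    using tiling_sites_bond[of ts x 0] assms(2,3) unfolding tilings_def by auto
  with ts(1) show ?thesis unfolding tilings_def by auto
qed


lemma PsiMD_hop:
  assumes "j \<notin> S" "j + 3 \<notin> S" "j + 1 \<in> S" "j + 2 \<in> S"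
  shows "PsiMD \<gamma> N S = - of_real (hop_amp \<gamma>) * PsiMD \<gamma> N (hop_out j S)"
proof (cases "\<exists>ts\<in>tilings N. S = tiling_sites 0 ts")
  case True
  then obtain ts where ts: "ts \<in> tilings N" "S = tiling_sites 0 ts" by blast
  then obtain xs ys where split: "ts = xs @ 2 # ys" "j = 3*(sum_list xs)"
    using tiling_sites_bond[of ts "j+1" 0] assms(3,4) unfolding tilings_def by auto
  with ts(1) have xs: "set xs \<subseteq> {1,2}" and "xs @ 1 # 1 # ys \<in> tilings N"
    unfolding tilings_def by auto
  moreover have "tiling_sites 0 (xs @ 1 # 1 # ys) = hop_out j S"
    using tiling_sites_dimer_hop(1)[OF xs, of 0 ys] ts(2) split by simp
  ultimately have "PsiMD \<gamma> N (hop_out j S) = tiling_weight (- of_real (hop_amp \<gamma>)) (xs @ 1 # 1 # ys)"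
    by (metis PsiMD_tiling_sites)
  then show ?thesis
    using PsiMD_tiling_sites[OF ts(1)] ts(2) split by (simp add: tiling_weight_append)
next
  case False
  then have "PsiMD \<gamma> N S = 0" by (auto intro: PsiMD_eq_0)
  moreover have "PsiMD \<gamma> N (hop_out j S) = 0"
  proof (rule PsiMD_eq_0, rule notI)
    fix ts assume ts: "ts \<in> tilings N" "hop_out j S = tiling_sites 0 ts"
    have "j \<in> hop_out j S" "j + 3 \<in> hop_out j S" "j + 1 \<notin> hop_out j S"
      unfolding hop_out_def by auto
    then obtain xs ys where split: "ts = xs @ 1 # 1 # ys" "j = 3*(sum_list xs)"
      using tiling_sites_monomer_pair[of ts j 0] ts unfolding tilings_def by auto
    with ts(1) have xs: "set xs \<subseteq> {1,2}" and "xs @ 2 # ys \<in> tilings N"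
      unfolding tilings_def by auto
    moreover have "tiling_sites 0 (xs @ 2 # ys) = S"
      using tiling_sites_dimer_hop(2)[OF xs, of 0 ys] ts(2) split hop_in_hop_out[OF assms] by simp
    ultimately show False using False by blast
  qed
  ultimately show ?thesis by simp
qed


section \<open>Zero energy\<close>

lemma BstarB_PsiMD: "BstarB \<gamma> j (PsiMD \<gamma> N) S = 0"
proof -
  let ?\<Psi> = "PsiMD \<gamma> N" and ?a = "complex_of_real (hop_amp \<gamma>)"
  consider (inner) "j \<notin> S \<and> j+3 \<notin> S \<and> j+1 \<in> S \<and> j+2 \<in> S"
    | (outer) "j+1 \<notin> S \<and> j+2 \<notin> S \<and> j \<in> S \<and> j+3 \<in> S"
    | (crowded) "j \<in> S \<and> j+2 \<in> S \<or> j+1 \<in> S \<and> j+3 \<in> S"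
    | (sparse) "\<not> (j+1 \<in> S \<and> j+2 \<in> S)" "\<not> (j \<in> S \<and> j+3 \<in> S)"
    by blast
  then show ?thesis
  proof cases
    case inner
    then have "?\<Psi> S = - ?a * ?\<Psi> (hop_out j S)" by (intro PsiMD_hop) auto
    with inner show ?thesis by (simp add: BstarB_apply)
  next
    case outer
    let ?T = "hop_in j S"
    have "j \<notin> ?T" "j+3 \<notin> ?T" "j+1 \<in> ?T" "j+2 \<in> ?T" unfolding hop_in_def by auto
    then have "?\<Psi> ?T = - ?a * ?\<Psi> (hop_out j ?T)" by (rule PsiMD_hop)
    also have "hop_out j ?T = S" using outer hop_out_hop_in by blast
    finally show ?thesis using outer by (simp add: BstarB_apply power2_eq_square)
  next
    case crowded
    moreover have "j + 1 + 2 = j + 3" by simp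
    ultimately have "?\<Psi> S = 0"
      using PsiMD_add2_eq_0[of j S] PsiMD_add2_eq_0[of "j+1" S] by metis
    with crowded show ?thesis by (auto simp: BstarB_apply)
  next
    case sparse
    then show ?thesis by (auto simp: BstarB_apply)
  qed
qed

lemma PsiMD_bond_not_boundary:
  assumes "PsiMD \<gamma> N S \<noteq> 0" "k \<in> S" "k + 1 \<in> S"
  shows "k \<notin> boundary_bonds {0..3*N-3}"
proof -
  obtain m where m: "k = 3*m + 1" "m + 2 \<le> N" using PsiMD_bond[OF assms] by blast
  then have "3*m \<in> windows {0..3*N-3}" unfolding windows_def by auto
  with m(1) show ?thesis unfolding boundary_bonds_def by auto
qed

lemma HMD_PsiMD: "HMD \<gamma> {0..3*N-3} (PsiMD \<gamma> N) = (\<lambda>S. 0)"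
proof
  fix S
  let ?\<Psi> = "PsiMD \<gamma> N"
  have "num k (num (k+1) ?\<Psi>) S = 0" if "k \<in> boundary_bonds {0..3*N-3}" for k
    using PsiMD_bond_not_boundary that by (fastforce simp: num_apply)
  moreover have "num k (num (k+2) ?\<Psi>) S = 0" for k
    using PsiMD_add2_eq_0 by (simp add: num_apply)
  ultimately show "HMD \<gamma> {0..3*N-3} ?\<Psi> S = 0"
    by (simp add: HMD_decompose BstarB_PsiMD)
qed

theorem proposition3p2:
  fixes \<gamma> :: real and N :: nat
  assumes "\<gamma> > 0" and "N \<ge> 1"
  defines "L \<equiv> {0..3*N-3}"
  shows "(\<forall>\<psi>. (\<forall>S. \<not> S \<subseteq> L \<longrightarrow> \<psi> S = 0) \<longrightarrow> 0 \<le> fock_inner L \<psi> (HMD \<gamma> L \<psi>))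
       \<and> HMD \<gamma> L (PsiMD \<gamma> N) = (\<lambda>S. 0)
       \<and> PsiMD \<gamma> N \<noteq> (\<lambda>S. 0)"
proof (intro conjI allI impI)
  text \<open>Positivity holds for every \<psi>, since fock_inner L only sees the values of \<psi> on subsets
    of L.\<close>
  fix \<psi> :: fock
  show "0 \<le> fock_inner L \<psi> (HMD \<gamma> L \<psi>)" unfolding L_def by (rule HMD_nonneg) simp
next
  show "HMD \<gamma> L (PsiMD \<gamma> N) = (\<lambda>S. 0)" unfolding L_def by (rule HMD_PsiMD)
next
  show "PsiMD \<gamma> N \<noteq> (\<lambda>S. 0)" by (rule PsiMD_nonzero)
qed

end
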